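(* Let $F(z)=\bar{z}G(z)+H(z)$, $z\in\mathbb{D}$, where $G(z)=\sum_{n=1}^\infty a_nz^n\not\equiv 0$ and $H(z)=z+\sum_{n=2}^\infty b_nz^n$ are analytic in $\mathbb{D}$, and suppose that for some $r\in(0,1)$, $$\sum_{n=2}^\infty n|b_n|r^{n-1}+\sum_{n=1}^\infty(n+1)|a_n|r^n\leq 1.$$ Then $F$ is sense-preserving, univalent and fully starlike in $\mathbb{D}_r$.
   Context: $\mathbb{D}=\{z:|z|<1\}$, $\mathbb{D}_r=\{z:|z|<r\}$. For a continuously differentiable $F$, $F_z=\frac12(F_x-iF_y)$, $F_{\bar z}=\frac12(F_x+iF_y)$, and the Jacobian is $J_F=|F_z|^2-|F_{\bar z}|^2$; $F$ is sense-preserving on a domain if $J_F>0$ there. $F$ is fully starlike in $\mathbb{D}_r$ if it is sense-preserving there, $F(0)=0$, $F(z)\neq 0$ for $z\in\mathbb{D}_r\setminus\{0\}$, and for each $s\in(0,r)$ the curve $t\mapsto F(se^{it})$ is starlike with respect to the origin, i.e. $\mathrm{Re}\big((zF_z(z)-\bar zF_{\bar z}(z))/F(z)\big)>0$ for all $|z|=s$. *)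

theory Defs
  imports "HOL-Analysis.Analysis"
begin

text \<open>Wirtinger derivatives of a (real-)differentiable function F on the complex plane,
  via the Frechet derivative L: F_x = L 1, F_y = L i.\<close>

definition wirt_z :: "(complex \<Rightarrow> complex) \<Rightarrow> complex \<Rightarrow> complex" where
  "wirt_z F z = (frechet_derivative F (at z) 1 - \<i> * frechet_derivative F (at z) \<i>) / 2"

definition wirt_zbar :: "(complex \<Rightarrow> complex) \<Rightarrow> complex \<Rightarrow> complex" where
  "wirt_zbar F z = (frechet_derivative F (at z) 1 + \<i> * frechet_derivative F (at z) \<i>) / 2"

definition jacobian_c :: "(complex \<Rightarrow> complex) \<Rightarrow> complex \<Rightarrow> real" where
  "jacobian_c F z = (cmod (wirt_z F z))\<^sup>2 - (cmod (wirt_zbar F z))\<^sup>2"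

definition sense_preserving :: "(complex \<Rightarrow> complex) \<Rightarrow> complex set \<Rightarrow> bool" where
  "sense_preserving F S \<longleftrightarrow> (\<forall>z\<in>S. F differentiable (at z) \<and> jacobian_c F z > 0)"

definition fully_starlike :: "(complex \<Rightarrow> complex) \<Rightarrow> real \<Rightarrow> bool" where
  "fully_starlike F r \<longleftrightarrow>
     sense_preserving F (ball 0 r) \<and> F 0 = 0 \<and> (\<forall>z\<in>ball 0 r - {0}. F z \<noteq> 0) \<and>
     (\<forall>s\<in>{0<..<r}. \<forall>z. cmod z = s \<longrightarrow>
        Re ((z * wirt_z F z - cnj z * wirt_zbar F z) / F z) > 0)"

end

theory Submission
  imports Defs
begin

text \<open>Write H(z) = z + h(z) and bound G, z G', h and z h' on the circle |z| = s by the power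
  series A0(s), A1(s), C0(s), C1(s) formed with the absolute values of their coefficients. The
  coefficient hypothesis says C1(r)/r + A1(r) + A0(r) \<le> 1; as h vanishes to second and G to first
  order at 0, it improves to C1(s) + s (A1(s) + A0(s)) < s for 0 < s < r. Everything follows from
  this inequality and the triangle inequality: |F_z| > |G| = |F_zbar| (sense preservation),
  |F(z) - F(w) - (z - w)| < |z - w| (univalence), and |A - F| < |A + F| for
  A = z F_z - conj(z) F_zbar, i.e. Re(A/F) > 0 (starlikeness).\<close>

section \<open>Majorant series of power series\<close>

definition powser_majorant :: "(nat \<Rightarrow> 'a::real_normed_vector) \<Rightarrow> real \<Rightarrow> real" where
  "powser_majorant c t = (\<Sum>n. norm (c n) * t ^ n)"

lemma sums_powser_majorant:
  fixes c :: "nat \<Rightarrow> 'a::{banach, real_normed_div_algebra}"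
  assumes "0 \<le> t" "ereal t < conv_radius c"
  shows "(\<lambda>n. norm (c n) * t ^ n) sums powser_majorant c t"
  unfolding powser_majorant_def
  by (rule summable_sums, rule summable_in_conv_radius) (use assms in auto)

lemma norm_sums_le:
  fixes f :: "nat \<Rightarrow> 'a::banach"
  assumes "f sums S" "g sums T" "\<And>n. norm (f n) \<le> g n"
  shows "norm S \<le> T"
  using norm_suminf_le[of f g] assms by (simp add: sums_iff)

lemma norm_powser_le_majorant:
  fixes c :: "nat \<Rightarrow> 'a::{banach, real_normed_div_algebra}"
  assumes "norm z \<le> t" "ereal t < conv_radius c"
  shows "norm (\<Sum>n. c n * z ^ n) \<le> powser_majorant c t"
proof (rule norm_sums_le)
  show "(\<lambda>n. c n * z ^ n) sums (\<Sum>n. c n * z ^ n)"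
    using assms by (intro summable_sums summable_in_conv_radius) (meson ereal_less_eq(3) le_less_trans)
  show "(\<lambda>n. norm (c n) * t ^ n) sums powser_majorant c t"
    using assms by (intro sums_powser_majorant) (auto intro: order_trans[OF norm_ge_zero])
  show "norm (c n * z ^ n) \<le> norm (c n) * t ^ n" for n
    using assms by (auto simp: norm_mult norm_power intro!: mult_left_mono power_mono)
qed

lemma powser_majorant_le_power_mult:
  fixes c :: "nat \<Rightarrow> 'a::{banach, real_normed_div_algebra}"
  assumes "\<And>n. n < k \<Longrightarrow> c n = 0" "0 \<le> s" "s \<le> r" "0 < r" "ereal r < conv_radius c"
  shows "powser_majorant c s \<le> (s / r) ^ k * powser_majorant c r"
proof (rule sums_le)
  show "(\<lambda>n. norm (c n) * s ^ n) sums powser_majorant c s"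
    using assms le_less_trans[of "ereal s" "ereal r"] by (intro sums_powser_majorant) auto
  show "(\<lambda>n. (s / r) ^ k * (norm (c n) * r ^ n)) sums ((s / r) ^ k * powser_majorant c r)"
    using assms by (intro sums_mult sums_powser_majorant) auto
  show "norm (c n) * s ^ n \<le> (s / r) ^ k * (norm (c n) * r ^ n)" for n
  proof (cases "n < k")
    case False
    have "s ^ n = (s / r) ^ n * r ^ n"
      using assms by (simp add: power_divide)
    also have "\<dots> \<le> (s / r) ^ k * r ^ n"
      using assms False by (intro mult_right_mono power_decreasing) auto
    finally show ?thesis
      by (simp add: mult_left_mono mult.left_commute)
  qed (simp add: assms)
qed

lemma conv_radius_of_nat_mult_ge:
  fixes c :: "nat \<Rightarrow> 'a::{banach, real_normed_field}"
  shows "conv_radius c \<le> conv_radius (\<lambda>n. of_nat n * c n)"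
proof -
  have "conv_radius c = fps_conv_radius (Abs_fps c)"
    by (simp add: fps_conv_radius_def)
  also have "\<dots> \<le> fps_conv_radius (fps_deriv (Abs_fps c))"
    by (rule fps_conv_radius_deriv)
  also have "\<dots> = conv_radius (\<lambda>n. of_nat (n + 1) * c (n + 1))"
    by (simp add: fps_conv_radius_def fps_deriv_def)
  also have "\<dots> = conv_radius (\<lambda>n. of_nat n * c n)"
    by (rule conv_radius_shift)
  finally show ?thesis .
qed

lemma norm_power_diff_le:
  fixes z w :: "'a::{real_normed_field}"
  assumes "norm z \<le> s" "norm w \<le> s"
  shows "s * norm (z ^ n - w ^ n) \<le> real n * s ^ n * norm (z - w)"
proof (cases "s = 0")
  case False
  then have s: "0 < s" using assms norm_ge_zero[of z] by linarith
  have "norm ((z / of_real s) ^ n - (w / of_real s) ^ n) \<le> real n * norm (z / of_real s - w / of_real s)"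
    using assms s by (intro norm_power_diff) (auto simp: norm_divide)
  then have "norm (z ^ n - w ^ n) / s ^ n \<le> real n * (norm (z - w) / s)"
    using s by (simp add: power_divide norm_divide norm_power flip: diff_divide_distrib)
  then show ?thesis
    using s by (simp add: field_simps power_Suc[symmetric] del: power_Suc)
qed (use assms in simp)

lemma norm_powser_diff_le:
  fixes c :: "nat \<Rightarrow> 'a::{banach, real_normed_field}"
  assumes "norm z \<le> s" "norm w \<le> s" "ereal s < conv_radius c"
  shows "s * norm ((\<Sum>n. c n * z ^ n) - (\<Sum>n. c n * w ^ n))
           \<le> norm (z - w) * powser_majorant (\<lambda>n. of_nat n * c n) s"
proof -
  have s: "0 \<le> s" using assms(1) norm_ge_zero order_trans by blast
  have "ereal (norm z) < conv_radius c" "ereal (norm w) < conv_radius c"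
    using assms le_less_trans[of _ "ereal s"] by auto
  then have "(\<lambda>n. of_real s * (c n * z ^ n - c n * w ^ n))
               sums (of_real s * ((\<Sum>n. c n * z ^ n) - (\<Sum>n. c n * w ^ n)))"
    by (intro sums_mult sums_diff summable_sums summable_in_conv_radius)
  moreover have "(\<lambda>n. norm (z - w) * (norm (of_nat n * c n) * s ^ n))
                   sums (norm (z - w) * powser_majorant (\<lambda>n. of_nat n * c n) s)"
    using s assms(3) conv_radius_of_nat_mult_ge[of c]
    by (intro sums_mult sums_powser_majorant) auto
  moreover have "norm (of_real s * (c n * z ^ n - c n * w ^ n))
                   \<le> norm (z - w) * (norm (of_nat n * c n) * s ^ n)" for n
  proof -
    have "norm (of_real s * (c n * z ^ n - c n * w ^ n)) = norm (c n) * (s * norm (z ^ n - w ^ n))"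
      using s by (simp add: norm_mult flip: right_diff_distrib)
    also have "\<dots> \<le> norm (c n) * (real n * s ^ n * norm (z - w))"
      by (intro mult_left_mono norm_power_diff_le assms) simp
    also have "\<dots> = norm (z - w) * (norm (of_nat n * c n) * s ^ n)"
      by (simp add: norm_mult)
    finally show ?thesis .
  qed
  ultimately have "norm (of_real s * ((\<Sum>n. c n * z ^ n) - (\<Sum>n. c n * w ^ n)))
                    \<le> norm (z - w) * powser_majorant (\<lambda>n. of_nat n * c n) s"
    by (rule norm_sums_le)
  then show ?thesis
    using s by (simp add: norm_mult)
qed

lemma has_field_derivative_sums_powser:
  fixes c :: "nat \<Rightarrow> 'a::{banach, real_normed_field}"
  assumes "\<forall>w\<in>ball 0 R. (\<lambda>n. c n * w ^ n) sums f w" "norm z < R"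
  shows "(f has_field_derivative (\<Sum>n. diffs c n * z ^ n)) (at z)"
proof (rule has_field_derivative_transform_within_open[where S = "ball 0 R"])
  show "((\<lambda>w. \<Sum>n. c n * w ^ n) has_field_derivative (\<Sum>n. diffs c n * z ^ n)) (at z)"
    using assms by (intro termdiffs_strong') (auto simp: sums_iff)
qed (use assms in \<open>auto simp: sums_iff\<close>)

lemma mult_suminf_diffs:
  fixes c :: "nat \<Rightarrow> 'a::{banach, real_normed_field}"
  assumes "summable (\<lambda>n. diffs c n * z ^ n)"
  shows "z * (\<Sum>n. diffs c n * z ^ n) = (\<Sum>n. of_nat n * c n * z ^ n)"
proof -
  have "(\<lambda>n. (\<lambda>n. of_nat n * c n * z ^ n) (Suc n)) sums (z * (\<Sum>n. diffs c n * z ^ n))"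
    using sums_mult[OF summable_sums[OF assms], of z] by (simp add: diffs_def algebra_simps)
  then show ?thesis
    by (subst (asm) sums_Suc_iff) (simp add: sums_iff)
qed

section \<open>Maps of the form \<open>\<lambda>z. cnj z * G z + H z\<close>\<close>

lemma wirtinger_cnj_mult_add:
  assumes "(G has_field_derivative G') (at z)" "(H has_field_derivative H') (at z)"
  defines "F \<equiv> \<lambda>w. cnj w * G w + H w"
  shows "F differentiable (at z)" "wirt_z F z = cnj z * G' + H'" "wirt_zbar F z = G z"
proof -
  have "(F has_derivative (\<lambda>h. cnj z * (G' * h) + cnj h * G z + H' * h)) (at z)"
    unfolding F_def using assms(1,2) unfolding has_field_derivative_def
    by (intro has_derivative_add has_derivative_mult has_derivative_cnj has_derivative_ident)
  note D = this frechet_derivative_at[OF this, symmetric]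
  show "F differentiable (at z)" using D(1) by (auto simp: differentiable_def)
  show "wirt_z F z = cnj z * G' + H'" "wirt_zbar F z = G z"
    unfolding wirt_z_def wirt_zbar_def D(2) by (simp_all add: algebra_simps)
qed

lemma Re_divide_pos_of_norm_diff_lt_norm_add:
  fixes A B :: complex
  assumes "norm (A - B) < norm (A + B)"
  shows "0 < Re (A / B)"
proof -
  have "B \<noteq> 0" using assms by auto
  define w where "w = A / B"
  have "A - B = B * (w - 1)" "A + B = B * (w + 1)"
    using \<open>B \<noteq> 0\<close> by (auto simp: w_def field_simps)
  then have "norm (w - 1)^2 < norm (w + 1)^2"
    using assms \<open>B \<noteq> 0\<close> by (simp add: norm_mult power_strict_mono)
  then show ?thesis
    unfolding w_def[symmetric] cmod_power2 by (simp add: power2_eq_square algebra_simps)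
qed

locale bianalytic_coefficient_bound =
  fixes a b :: "nat \<Rightarrow> complex" and G H F :: "complex \<Rightarrow> complex" and r :: real
  assumes G_sums: "\<forall>z\<in>ball 0 1. (\<lambda>n. a n * z ^ n) sums G z" and a0: "a 0 = 0"
    and H_sums: "\<forall>z\<in>ball 0 1. (\<lambda>n. b n * z ^ n) sums H z" and b0: "b 0 = 0" and b1: "b 1 = 1"
    and F_def: "\<forall>z. F z = cnj z * G z + H z"
    and r: "0 < r" "r < 1"
    and coeff: "(\<Sum>n. real (n + 2) * cmod (b (n + 2)) * r ^ (n + 1))
              + (\<Sum>n. real (n + 2) * cmod (a (n + 1)) * r ^ (n + 1)) \<le> 1"
begin

definition c :: "nat \<Rightarrow> complex" where
  "c = b(1 := 0)"

abbreviation "A0 \<equiv> powser_majorant a"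
abbreviation "A1 \<equiv> powser_majorant (\<lambda>n. of_nat n * a n)"
abbreviation "C0 \<equiv> powser_majorant c"
abbreviation "C1 \<equiv> powser_majorant (\<lambda>n. of_nat n * c n)"

lemma c_sums: "norm z < 1 \<Longrightarrow> (\<lambda>n. c n * z ^ n) sums (H z - z)"
proof -
  assume "norm z < 1"
  then have "(\<lambda>n. b n * z ^ n - (if n = 1 then z ^ n else 0)) sums (H z - z)"
    using H_sums sums_single[of 1 "\<lambda>n. z ^ n"] by (intro sums_diff) auto
  moreover have "(\<lambda>n. b n * z ^ n - (if n = 1 then z ^ n else 0)) = (\<lambda>n. c n * z ^ n)"
    using b1 by (auto simp: c_def)
  ultimately show ?thesis
    by simp
qed

lemma G_eq: "norm z < 1 \<Longrightarrow> G z = (\<Sum>n. a n * z ^ n)"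
  using G_sums by (simp add: sums_iff)

lemma H_eq: "norm z < 1 \<Longrightarrow> H z = z + (\<Sum>n. c n * z ^ n)"
  using c_sums by (simp add: sums_iff)

lemma F_eq: "norm z < 1 \<Longrightarrow> F z = z + cnj z * (\<Sum>n. a n * z ^ n) + (\<Sum>n. c n * z ^ n)"
  using F_def G_eq H_eq by simp

lemma F_0: "F 0 = 0"
  using F_eq[of 0] a0 b0 by (simp add: c_def)

lemma conv_radius_gt:
  assumes "t < 1"
  shows "ereal t < conv_radius a" "ereal t < conv_radius c"
    and "ereal t < conv_radius (\<lambda>n. of_nat n * a n)" "ereal t < conv_radius (\<lambda>n. of_nat n * c n)"
proof -
  have "1 \<le> conv_radius a" "1 \<le> conv_radius c"
    using G_sums c_sums by (auto simp: le_conv_radius_iff[where \<xi> = 0] sums_iff one_ereal_def)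
  moreover have "ereal t < 1"
    using assms by (simp add: one_ereal_def)
  ultimately show "ereal t < conv_radius a" "ereal t < conv_radius c"
    "ereal t < conv_radius (\<lambda>n. of_nat n * a n)" "ereal t < conv_radius (\<lambda>n. of_nat n * c n)"
    using conv_radius_of_nat_mult_ge less_le_trans order_trans by metis+
qed

lemma majorant_sums:
  assumes "0 \<le> t" "t < 1"
  shows "(\<lambda>n. norm (a n) * t ^ n) sums A0 t" "(\<lambda>n. real n * norm (a n) * t ^ n) sums A1 t"
    and "(\<lambda>n. norm (c n) * t ^ n) sums C0 t" "(\<lambda>n. real n * norm (c n) * t ^ n) sums C1 t"
  using conv_radius_gt[OF assms(2), THEN sums_powser_majorant[OF assms(1)]]
  by (simp_all add: norm_mult)

lemma norm_le_majorant:
  assumes "norm z \<le> t" "t < 1"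
  shows "norm (\<Sum>n. a n * z ^ n) \<le> A0 t" "norm (\<Sum>n. of_nat n * a n * z ^ n) \<le> A1 t"
    and "norm (\<Sum>n. c n * z ^ n) \<le> C0 t" "norm (\<Sum>n. of_nat n * c n * z ^ n) \<le> C1 t"
  using conv_radius_gt[OF assms(2), THEN norm_powser_le_majorant[OF assms(1)]] by simp_all

lemma coeff_condition_majorants: "C1 r / r + (A1 r + A0 r) \<le> 1"
proof -
  have "(\<lambda>n. real (n + 2) * norm (c (n + 2)) * r ^ (n + 2)) sums C1 r"
    using majorant_sums(4)[of r] r by (subst sums_iff_shift) (simp add: numeral_2_eq_2 c_def b0)
  from sums_divide[OF this, of r]
  have "(\<lambda>n. real (n + 2) * cmod (b (n + 2)) * r ^ (n + 1)) sums (C1 r / r)"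
    using r by (simp add: c_def mult.assoc)
  moreover have "(\<lambda>n. real n * norm (a n) * r ^ n + norm (a n) * r ^ n) sums (A1 r + A0 r)"
    using majorant_sums r by (intro sums_add) auto
  then have "(\<lambda>n. real (n + 1) * norm (a (n + 1)) * r ^ (n + 1) + norm (a (n + 1)) * r ^ (n + 1))
               sums (A1 r + A0 r)"
    by (subst sums_iff_shift[where n = 1]) (simp add: a0)
  then have "(\<lambda>n. real (n + 2) * cmod (a (n + 1)) * r ^ (n + 1)) sums (A1 r + A0 r)"
    by (simp add: algebra_simps)
  ultimately show ?thesis
    using coeff by (simp add: sums_iff)
qed

lemma majorant_estimate:
  assumes "0 < s" "s < r"
  shows "C1 s + s * (A1 s + A0 s) < s"
proof -
  have "C1 s \<le> (s / r) ^ 2 * C1 r"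
    using assms r conv_radius_gt(4)[of r]
    by (intro powser_majorant_le_power_mult) (auto simp: c_def b0 less_2_cases_iff)
  moreover have "A1 s \<le> (s / r) ^ 1 * A1 r" "A0 s \<le> (s / r) ^ 1 * A0 r"
    using assms r conv_radius_gt(1,3)[of r]
    by (intro powser_majorant_le_power_mult; simp add: a0)+
  ultimately have "C1 s + s * (A1 s + A0 s) \<le> (s / r) ^ 2 * C1 r + s * ((s / r) * (A1 r + A0 r))"
    using assms by (intro add_mono mult_left_mono) (auto simp: distrib_left)
  also have "\<dots> = (s ^ 2 / r) * (C1 r / r + (A1 r + A0 r))"
    using r by (simp add: field_simps power2_eq_square)
  also have "\<dots> \<le> s ^ 2 / r"
    by (rule mult_left_le) (use coeff_condition_majorants assms r in auto)
  also have "\<dots> < s"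
    using assms by (simp add: field_simps power2_eq_square)
  finally show ?thesis .
qed

lemma
  assumes "norm z < 1"
  shows F_differentiable: "F differentiable (at z)"
    and wirt_z_eq: "wirt_z F z = cnj z * (\<Sum>n. diffs a n * z ^ n) + 1 + (\<Sum>n. diffs c n * z ^ n)"
    and wirt_zbar_eq: "wirt_zbar F z = G z"
proof -
  have F: "F = (\<lambda>w. cnj w * G w + H w)"
    using F_def by auto
  have G: "(G has_field_derivative (\<Sum>n. diffs a n * z ^ n)) (at z)"
    using G_sums assms by (rule has_field_derivative_sums_powser)
  have "((\<lambda>w. H w - w + w) has_field_derivative (\<Sum>n. diffs c n * z ^ n) + 1) (at z)"
    using c_sums assms by (intro DERIV_add DERIV_ident has_field_derivative_sums_powser) auto
  then have H: "(H has_field_derivative 1 + (\<Sum>n. diffs c n * z ^ n)) (at z)"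
    by (simp add: add.commute)
  show "F differentiable (at z)" "wirt_zbar F z = G z"
    unfolding F using wirtinger_cnj_mult_add[OF G H] by simp_all
  show "wirt_z F z = cnj z * (\<Sum>n. diffs a n * z ^ n) + 1 + (\<Sum>n. diffs c n * z ^ n)"
    unfolding F using wirtinger_cnj_mult_add(2)[OF G H] by (simp add: add.assoc)
qed

lemma z_mult_wirt_z_eq:
  assumes "norm z < 1"
  shows "z * wirt_z F z = z + cnj z * (\<Sum>n. of_nat n * a n * z ^ n) + (\<Sum>n. of_nat n * c n * z ^ n)"
proof -
  have "summable (\<lambda>n. diffs a n * z ^ n)" "summable (\<lambda>n. diffs c n * z ^ n)"
    using assms G_sums c_sums by (auto intro!: termdiff_converges[of z 1] simp: sums_iff)
  then have "z * (\<Sum>n. diffs a n * z ^ n) = (\<Sum>n. of_nat n * a n * z ^ n)"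
    "z * (\<Sum>n. diffs c n * z ^ n) = (\<Sum>n. of_nat n * c n * z ^ n)"
    by (simp_all add: mult_suminf_diffs)
  then show ?thesis
    using assms by (simp add: wirt_z_eq distrib_left mult.left_commute[of z])
qed

lemma norm_G_lt_norm_wirt_z:
  assumes "norm z < r"
  shows "norm (G z) < norm (wirt_z F z)"
proof (cases "z = 0")
  case True
  then show ?thesis
    using wirt_z_eq[of 0] G_eq[of 0] a0 by (simp add: diffs_def c_def)
next
  case False
  define s where "s = norm z"
  have s: "0 < s" "s < r" "s < 1"
    using False assms r by (auto simp: s_def)
  define R where "R = (\<Sum>n. of_nat n * a n * z ^ n)"
  define P where "P = (\<Sum>n. of_nat n * c n * z ^ n)"
  have "z = z * wirt_z F z - cnj z * R - P"
    using s by (simp add: z_mult_wirt_z_eq s_def R_def P_def)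
  then have "s \<le> norm (z * wirt_z F z) + norm (cnj z * R) + norm P"
    using norm_triangle_ineq4[of "z * wirt_z F z - cnj z * R" P]
      norm_triangle_ineq4[of "z * wirt_z F z" "cnj z * R"] by (simp add: s_def)
  also have "\<dots> \<le> s * norm (wirt_z F z) + s * A1 s + C1 s"
    using norm_le_majorant(2,4)[of z s] s unfolding R_def P_def
    by (intro add_mono) (auto simp: norm_mult s_def intro: mult_left_mono)
  finally have "s - s * A1 s - C1 s \<le> s * norm (wirt_z F z)"
    by simp
  moreover have "s * norm (G z) \<le> s * A0 s"
    using norm_le_majorant(1)[of z s] s by (simp add: G_eq mult_left_mono s_def)
  moreover have "C1 s + s * A1 s + s * A0 s < s"
    using majorant_estimate[of s] s by (simp add: distrib_left add.assoc)
  ultimately have "s * norm (G z) < s * norm (wirt_z F z)"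
    by linarith
  then show ?thesis
    using s by simp
qed

lemma sense_preserving_on_ball: "sense_preserving F (ball 0 r)"
  unfolding sense_preserving_def jacobian_c_def
proof (intro ballI conjI)
  fix z :: complex
  assume "z \<in> ball 0 r"
  then have "norm z < r" "norm z < 1"
    using r by auto
  then show "F differentiable (at z)" "0 < (cmod (wirt_z F z))\<^sup>2 - (cmod (wirt_zbar F z))\<^sup>2"
    using F_differentiable norm_G_lt_norm_wirt_z wirt_zbar_eq by (auto intro: power_strict_mono)
qed

lemma inj_on_ball: "inj_on F (ball 0 r)"
proof (rule inj_onI, rule ccontr)
  fix z w
  assume zw: "z \<in> ball 0 r" "w \<in> ball 0 r" "F z = F w" "z \<noteq> w"
  define s where "s = max (norm z) (norm w)"
  have s: "0 < s" "s < r" "s < 1" "norm z \<le> s" "norm w \<le> s"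
    using zw r by (auto simp: s_def max_def)
  define g where "g x = (\<Sum>n. a n * x ^ n)" for x
  define h where "h x = (\<Sum>n. c n * x ^ n)" for x
  have h_lip: "s * norm (h z - h w) \<le> norm (z - w) * C1 s"
    unfolding h_def using s conv_radius_gt(2)[of s] by (intro norm_powser_diff_le) auto
  have g_lip: "s * norm (g z - g w) \<le> norm (z - w) * A1 s"
    unfolding g_def using s conv_radius_gt(1)[of s] by (intro norm_powser_diff_le) auto
  have g_bound: "norm (g z) \<le> A0 s"
    unfolding g_def using s by (intro norm_le_majorant)
  have "z - w = (h w - h z) + cnj w * (g w - g z) - cnj (z - w) * g z"
    using zw(3) F_eq[of z] F_eq[of w] s by (simp add: g_def h_def algebra_simps)
  then have "norm (z - w) \<le> norm (h w - h z) + norm (cnj w * (g w - g z)) + norm (cnj (z - w) * g z)"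
    by (metis norm_triangle_ineq norm_triangle_ineq4 add_right_mono order_trans)
  then have "norm (z - w) \<le> norm (h z - h w) + norm w * norm (g z - g w) + norm (z - w) * norm (g z)"
    by (simp add: norm_mult norm_minus_commute del: complex_cnj_diff)
  then have "s * norm (z - w)
      \<le> s * norm (h z - h w) + norm w * (s * norm (g z - g w)) + s * norm (z - w) * norm (g z)"
    using s by (auto simp: algebra_simps dest: mult_left_mono[of _ _ s])
  also have "\<dots> \<le> norm (z - w) * C1 s + s * (norm (z - w) * A1 s) + s * norm (z - w) * A0 s"
  proof (intro add_mono)
    show "norm w * (s * norm (g z - g w)) \<le> s * (norm (z - w) * A1 s)"
      by (rule mult_mono) (use s g_lip in auto)
    show "s * norm (z - w) * norm (g z) \<le> s * norm (z - w) * A0 s"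
      using s g_bound by (intro mult_left_mono) auto
  qed (fact h_lip)
  also have "\<dots> = norm (z - w) * (C1 s + s * (A1 s + A0 s))"
    by (simp add: algebra_simps)
  also have "\<dots> < norm (z - w) * s"
    using majorant_estimate[of s] s zw(4) by simp
  finally show False
    by (simp add: mult.commute)
qed

lemma starlike_on_circle:
  assumes "0 < s" "s < r" "norm z = s"
  shows "0 < Re ((z * wirt_z F z - cnj z * wirt_zbar F z) / F z)"
proof -
  have s: "s < 1" "norm z < 1"
    using assms r by auto
  define R where "R = (\<Sum>n. of_nat n * a n * z ^ n)"
  define g where "g = (\<Sum>n. a n * z ^ n)"
  define P where "P = (\<Sum>n. of_nat n * c n * z ^ n)"
  define Q where "Q = (\<Sum>n. c n * z ^ n)"
  have R: "norm R \<le> A1 s" and g: "norm g \<le> A0 s" and P: "norm P \<le> C1 s" and Q: "norm Q \<le> C0 s"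
    unfolding R_def g_def P_def Q_def using norm_le_majorant[of z s] s assms by auto
  have PQ: "norm (P - Q) \<le> C1 s - C0 s"
  proof (rule norm_sums_le)
    show "(\<lambda>n. of_nat n * c n * z ^ n - c n * z ^ n) sums (P - Q)"
      unfolding P_def Q_def using conv_radius_gt(2,4)[of "norm z"] s
      by (intro sums_diff summable_sums summable_in_conv_radius) auto
    show "(\<lambda>n. real n * norm (c n) * s ^ n - norm (c n) * s ^ n) sums (C1 s - C0 s)"
      using majorant_sums(3,4)[of s] assms s by (intro sums_diff) auto
    show "norm (of_nat n * c n * z ^ n - c n * z ^ n) \<le> real n * norm (c n) * s ^ n - norm (c n) * s ^ n"
      for n
    proof (cases n)
      case 0
      then show ?thesis by (simp add: c_def b0)
    next
      case (Suc m)
      then have "of_nat n * c n * z ^ n - c n * z ^ n = of_nat m * (c n * z ^ n)"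
        by (simp add: algebra_simps)
      then show ?thesis
        using Suc assms by (simp add: norm_mult norm_power algebra_simps)
    qed
  qed
  define A where "A = z * wirt_z F z - cnj z * wirt_zbar F z"
  have A_minus_F: "A - F z = (P - Q) + cnj z * (R - 2 * g)"
    and A_plus_F: "2 * z = (A + F z) - (P + Q) - cnj z * R"
    unfolding A_def using s
    by (simp_all add: z_mult_wirt_z_eq wirt_zbar_eq G_eq F_eq P_def Q_def R_def g_def algebra_simps)
  have "norm (R - 2 * g) \<le> A1 s + 2 * A0 s"
    using norm_triangle_ineq4[of R "2 * g"] R g by (simp add: norm_mult)
  then have "norm (cnj z * (R - 2 * g)) \<le> s * (A1 s + 2 * A0 s)"
    using assms by (simp add: norm_mult mult_left_mono)
  then have "norm (A - F z) \<le> (C1 s - C0 s) + s * (A1 s + 2 * A0 s)"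
    unfolding A_minus_F using norm_triangle_ineq[of "P - Q" "cnj z * (R - 2 * g)"] PQ by linarith
  moreover have "2 * s \<le> norm (A + F z) + (C1 s + C0 s) + s * A1 s"
  proof -
    have "2 * s \<le> norm (A + F z) + norm (P + Q) + s * norm R"
      using arg_cong[OF A_plus_F, of norm] norm_triangle_ineq4[of "A + F z - (P + Q)" "cnj z * R"]
        norm_triangle_ineq4[of "A + F z" "P + Q"] assms by (simp add: norm_mult)
    moreover have "s * norm R \<le> s * A1 s"
      using R assms by (simp add: mult_left_mono)
    ultimately show ?thesis
      using norm_triangle_ineq[of P Q] P Q by linarith
  qed
  moreover have "C1 s + s * A1 s + s * A0 s < s"
    using majorant_estimate assms by (simp add: distrib_left add.assoc)
  ultimately have "norm (A - F z) < norm (A + F z)"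
    by (simp add: algebra_simps)
  then show ?thesis
    unfolding A_def by (rule Re_divide_pos_of_norm_diff_lt_norm_add)
qed

lemma fully_starlike_on_ball: "fully_starlike F r"
  unfolding fully_starlike_def
  using sense_preserving_on_ball F_0 inj_onD[OF inj_on_ball, of _ 0] r
  by (auto intro!: starlike_on_circle[OF _ _ refl])

end

theorem lemma3p4:
  fixes a b :: "nat \<Rightarrow> complex" and G H F :: "complex \<Rightarrow> complex" and r :: real
  assumes G_ser: "\<forall>z\<in>ball 0 1. (\<lambda>n. a n * z ^ n) sums G z" and a0: "a 0 = 0"
    and H_ser: "\<forall>z\<in>ball 0 1. (\<lambda>n. b n * z ^ n) sums H z" and b0: "b 0 = 0" and b1: "b 1 = 1"
    and G_nonzero: "\<exists>z\<in>ball 0 1. G z \<noteq> 0"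
    and F_def: "\<forall>z. F z = cnj z * G z + H z"
    and r: "0 < r" "r < 1"
    and coeff: "(\<Sum>n. real (n + 2) * cmod (b (n + 2)) * r ^ (n + 1))
              + (\<Sum>n. real (n + 2) * cmod (a (n + 1)) * r ^ (n + 1)) \<le> 1"
  shows "sense_preserving F (ball 0 r) \<and> inj_on F (ball 0 r) \<and> fully_starlike F r"
proof -
  interpret bianalytic_coefficient_bound a b G H F r
    using G_ser a0 H_ser b0 b1 F_def r coeff by unfold_locales
  show ?thesis
    using sense_preserving_on_ball inj_on_ball fully_starlike_on_ball by blast
qed

end
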